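(* Let $x_i$ be a mechanism for agent $i$ satisfying (P) and (IC), with indirect utility $U_i(s_i)=\max_{t\in[\underline s,\overline s]}U_i(t;s_i)$ on $[\underline s,\overline s]$. Then there is a function $\tilde U_i:[0,1]\to\mathbb R$ coinciding with $U_i$ on $[\underline s,\overline s]$ that is nondecreasing, convex, $2$-Lipschitz, and satisfies $0\le\tilde U_i\le\overline U_i$ on $[0,1]$.
   Context: Setup. A state $\omega\in\{-1,+1\}$ is drawn with probability $1/2$ each. There are $n\ge2$ agents. Conditional on $\omega$, signals are i.i.d. with distribution $\mathbb F_\omega$ on $[0,1]$, normalized so that $s_i=\mathbb P[\omega=+1\mid s_i]$; $\mathbb F_{-1},\mathbb F_{+1}$ mutually absolutely continuous with densities; $\mathbb F=(\mathbb F_{-1}+\mathbb F_{+1})/2$ has density supported on a non-singleton interval with endpoints $\underline s<\overline s$ in $[0,1]$. A mechanism for agent $i$ is measurable $x_i:[\underline s,\overline s]^n\to[0,1]$ (probability of receiving a good worth $\omega$, else payoff $0$). (P): $\mathbb E[\omega x_i(s_i,s_{-i})\mid s_i]\ge0$; (IC): $\mathbb E[\omega x_i(s_i,s_{-i})\mid s_i]\ge\mathbb E[\omega x_i(\hat s_i,s_{-i})\mid s_i]$, for all $s_i,\hat s_i$ in the support. For a report $t$ and a belief $s\in[0,1]$, $U_i(t;s)=s\,\mathbb E[x_i(t,s_{-i})\mid\omega=+1]-(1-s)\,\mathbb E[x_i(t,s_{-i})\mid\omega=-1]$ (equal to $\mathbb E[\omega x_i(t,s_{-i})\mid s_i=s]$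 for $s$ in the support). The first-best payoff is, for $s\in[0,1]$, $\overline U_i(s)=s\,\mathbb P[e(s,s_{-i})\mid\omega=+1]-(1-s)\,\mathbb P[e(s,s_{-i})\mid\omega=-1]$ where $e(s,s_{-i})$ is the event $s\prod_{k\ne i}s_k\ge(1-s)\prod_{k\ne i}(1-s_k)$ (i.e., $\mathrm{LR}(s,s_{-i})\ge1$); it is the interim payoff under the efficient allocation. *)

theory Defs
  imports "HOL-Probability.Probability"
begin

text \<open>The conditional signal law F_omega has
  Lebesgue density f (f = fp for omega = +1, f = fm for omega = -1).\<close>

definition others_law :: "(real \<Rightarrow> real) \<Rightarrow> nat \<Rightarrow> nat \<Rightarrow> (nat \<Rightarrow> real) measure" where
  "others_law f n i = PiM ({0..<n} - {i}) (\<lambda>_. density lborel (\<lambda>s. ennreal (f s)))"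

definition cond_alloc ::
  "((nat \<Rightarrow> real) \<Rightarrow> real) \<Rightarrow> (real \<Rightarrow> real) \<Rightarrow> nat \<Rightarrow> nat \<Rightarrow> real \<Rightarrow> real" where
  "cond_alloc x f n i t = (\<integral>\<sigma>. x (\<sigma>(i := t)) \<partial>(others_law f n i))"

definition util ::
  "((nat \<Rightarrow> real) \<Rightarrow> real) \<Rightarrow> (real \<Rightarrow> real) \<Rightarrow> (real \<Rightarrow> real) \<Rightarrow> nat \<Rightarrow> nat \<Rightarrow> real \<Rightarrow> real \<Rightarrow> real" where
  "util x fp fm n i t s = s * cond_alloc x fp n i t - (1 - s) * cond_alloc x fm n i t"

definition indirect_util ::
  "((nat \<Rightarrow> real) \<Rightarrow> real) \<Rightarrow> (real \<Rightarrow> real) \<Rightarrow> (real \<Rightarrow> real) \<Rightarrow> nat \<Rightarrow> nat \<Rightarrow> real \<Rightarrow> real \<Rightarrow> real \<Rightarrow> real" where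
  "indirect_util x fp fm n i slo shi s = (SUP t\<in>{slo..shi}. util x fp fm n i t s)"

definition eff_event :: "nat \<Rightarrow> nat \<Rightarrow> real \<Rightarrow> (nat \<Rightarrow> real) set" where
  "eff_event n i s = {\<sigma>. s * (\<Prod>k\<in>{0..<n} - {i}. \<sigma> k) \<ge> (1 - s) * (\<Prod>k\<in>{0..<n} - {i}. (1 - \<sigma> k))}"

definition first_best ::
  "(real \<Rightarrow> real) \<Rightarrow> (real \<Rightarrow> real) \<Rightarrow> nat \<Rightarrow> nat \<Rightarrow> real \<Rightarrow> real" where
  "first_best fp fm n i s =
     s * measure (others_law fp n i) (eff_event n i s \<inter> space (others_law fp n i))
     - (1 - s) * measure (others_law fm n i) (eff_event n i s \<inter> space (others_law fm n i))"

end

(*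
  Each report t yields the line s * a t - (1 - s) * b t in the belief s, where a t and b t
  are the conditional probabilities of allocation given omega = +1 and omega = -1; both lie
  in [0,1], so every such line is nondecreasing with slope at most 2.  The positive part of
  their upper envelope is therefore nondecreasing, convex and 2-Lipschitz on the whole line,
  and by (P) it agrees with the indirect utility on the support.  For the upper bound, the
  normalization s = P[omega = +1 | s] makes the two conditional signal densities s * g s and
  (1 - s) * g s for a common g, so the product densities of the other agents' signals
  satisfy s * A - (1 - s) * B = (prod g) * (s * prod s_k - (1 - s) * prod (1 - s_k)).  By a
  Neyman-Pearson argument, no allocation rule with values in [0,1] beats the indicator of
  the efficient event, whose value is the first-best payoff.
*)
theory Submission
  imports Defs
begin

locale unit_lines =
  fixes T :: "'a set" and a b :: "'a \<Rightarrow> real"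
  assumes nonempty: "T \<noteq> {}"
    and a_range: "t \<in> T \<Longrightarrow> 0 \<le> a t \<and> a t \<le> 1"
    and b_range: "t \<in> T \<Longrightarrow> 0 \<le> b t \<and> b t \<le> 1"
begin

definition line :: "'a \<Rightarrow> real \<Rightarrow> real" where
  "line t s = s * a t - (1 - s) * b t"

definition envelope :: "real \<Rightarrow> real" where
  "envelope s = max 0 (SUP t\<in>T. line t s)"

lemma line_convex_combination: "line t ((1 - l) * x + l * y) = (1 - l) * line t x + l * line t y"
  unfolding line_def by (simp add: algebra_simps)

lemma line_increment:
  assumes "t \<in> T" "s \<le> s'"
  shows "line t s \<le> line t s'" "line t s' \<le> line t s + 2 * (s' - s)"
proof -
  have slope: "line t s' = line t s + (s' - s) * (a t + b t)"
    unfolding line_def by (simp add: algebra_simps)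
  have "0 \<le> a t + b t" "a t + b t \<le> 2"
    using a_range[OF \<open>t \<in> T\<close>] b_range[OF \<open>t \<in> T\<close>] by auto
  then have "0 \<le> (s' - s) * (a t + b t)" "(s' - s) * (a t + b t) \<le> (s' - s) * 2"
    using \<open>s \<le> s'\<close> by (simp, intro mult_left_mono) auto
  then show "line t s \<le> line t s'" "line t s' \<le> line t s + 2 * (s' - s)"
    unfolding slope by linarith+
qed

lemma bdd_above_lines: "bdd_above ((\<lambda>t. line t s) ` T)"
proof (rule bdd_aboveI2)
  fix t assume "t \<in> T"
  then have "\<bar>s * a t\<bar> \<le> \<bar>s\<bar>" "\<bar>(1 - s) * b t\<bar> \<le> \<bar>1 - s\<bar>"
    using a_range b_range by (auto simp: abs_mult mult_left_le)
  then show "line t s \<le> \<bar>s\<bar> + \<bar>1 - s\<bar>"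
    unfolding line_def by linarith
qed

lemma line_le_Sup: "t \<in> T \<Longrightarrow> line t s \<le> (SUP t\<in>T. line t s)"
  by (rule cSUP_upper[OF _ bdd_above_lines])

lemma Sup_lines_le: "(\<And>t. t \<in> T \<Longrightarrow> line t s \<le> c) \<Longrightarrow> (SUP t\<in>T. line t s) \<le> c"
  using nonempty by (rule cSUP_least)

lemma Sup_lines_increment:
  assumes "s \<le> s'"
  shows "(SUP t\<in>T. line t s) \<le> (SUP t\<in>T. line t s')"
    and "(SUP t\<in>T. line t s') \<le> (SUP t\<in>T. line t s) + 2 * (s' - s)"
proof -
  show "(SUP t\<in>T. line t s) \<le> (SUP t\<in>T. line t s')"
    by (rule Sup_lines_le, rule order_trans[OF line_increment(1)[OF _ assms] line_le_Sup])
  show "(SUP t\<in>T. line t s') \<le> (SUP t\<in>T. line t s) + 2 * (s' - s)"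
    by (rule Sup_lines_le, rule order_trans[OF line_increment(2)[OF _ assms] add_right_mono[OF line_le_Sup]])
qed

lemma envelope_nonneg: "0 \<le> envelope s"
  unfolding envelope_def by simp

lemma line_le_envelope: "t \<in> T \<Longrightarrow> line t s \<le> envelope s"
  unfolding envelope_def using line_le_Sup by (simp add: le_max_iff_disj)

lemma envelope_le: "0 \<le> c \<Longrightarrow> (\<And>t. t \<in> T \<Longrightarrow> line t s \<le> c) \<Longrightarrow> envelope s \<le> c"
  unfolding envelope_def using Sup_lines_le by simp

lemma envelope_eq_Sup: "t \<in> T \<Longrightarrow> 0 \<le> line t s \<Longrightarrow> envelope s = (SUP t\<in>T. line t s)"
  unfolding envelope_def using line_le_Sup[of t s] by (simp add: max_def)

lemma mono_envelope: "mono envelope"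
  unfolding envelope_def by (intro monoI max.mono order_refl Sup_lines_increment(1))

lemma convex_envelope: "convex_on UNIV envelope"
proof (rule convex_onI)
  fix l x y :: real assume l: "0 < l" "l < 1"
  show "envelope ((1 - l) *\<^sub>R x + l *\<^sub>R y) \<le> (1 - l) * envelope x + l * envelope y"
  proof (rule envelope_le)
    show "0 \<le> (1 - l) * envelope x + l * envelope y"
      using l envelope_nonneg by simp
    fix t assume "t \<in> T"
    then show "line t ((1 - l) *\<^sub>R x + l *\<^sub>R y) \<le> (1 - l) * envelope x + l * envelope y"
      using l line_le_envelope[of t] unfolding scaleR_conv_of_real of_real_eq_id id_def line_convex_combination
      by (intro add_mono mult_left_mono) auto
  qed
qed simp

lemma lipschitz_envelope: "2-lipschitz_on UNIV envelope"
proof (rule lipschitz_on_leI)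
  fix s s' :: real assume "s \<le> s'"
  then show "dist (envelope s) (envelope s') \<le> 2 * dist s s'"
    using Sup_lines_increment[of s s'] unfolding envelope_def dist_real_def by (auto simp: max_def)
qed simp

end

lemma PiM_density_eq_density_prod:
  fixes a :: "real \<Rightarrow> real" and J :: "'i set"
  assumes J: "finite J" and [measurable]: "a \<in> borel_measurable borel" and a_nonneg: "\<And>s. 0 \<le> a s"
    and sigma_finite: "sigma_finite_measure (density lborel a)"
  shows "PiM J (\<lambda>_. density lborel a) = density (PiM J (\<lambda>_. lborel)) (\<lambda>\<sigma>. \<Prod>k\<in>J. a (\<sigma> k))"
proof -
  interpret P: product_sigma_finite "\<lambda>_. density lborel a"
    unfolding product_sigma_finite_def using sigma_finite by simp
  interpret L: product_sigma_finite "\<lambda>_. lborel :: real measure"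
    unfolding product_sigma_finite_def by (simp add: lborel.sigma_finite_measure_axioms)
  show ?thesis
  proof (rule sym, rule P.PiM_eqI[OF J])
    show "sets (density (PiM J (\<lambda>_. lborel)) (\<lambda>\<sigma>. \<Prod>k\<in>J. a (\<sigma> k))) = sets (PiM J (\<lambda>_. density lborel a))"
      by (auto intro!: sets_PiM_cong)
  next
    fix A assume "\<And>k. k \<in> J \<Longrightarrow> A k \<in> sets (density lborel a)"
    then have A[measurable]: "\<And>k. k \<in> J \<Longrightarrow> A k \<in> sets borel" by simp
    have "emeasure (density (PiM J (\<lambda>_. lborel)) (\<lambda>\<sigma>. \<Prod>k\<in>J. a (\<sigma> k))) (PiE J A)
       = (\<integral>\<^sup>+ \<sigma>. ennreal (\<Prod>k\<in>J. a (\<sigma> k)) * indicator (PiE J A) \<sigma> \<partial>PiM J (\<lambda>_. lborel))"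
      by (rule emeasure_density) (auto intro!: sets_PiM_I_finite J)
    also have "\<dots> = (\<integral>\<^sup>+ \<sigma>. (\<Prod>k\<in>J. ennreal (a (\<sigma> k)) * indicator (A k) (\<sigma> k)) \<partial>PiM J (\<lambda>_. lborel))"
      by (intro nn_integral_cong)
        (auto simp: prod_ennreal a_nonneg prod.distrib indicator_def PiE_iff space_PiM J prod.neutral)
    also have "\<dots> = (\<Prod>k\<in>J. \<integral>\<^sup>+ s. ennreal (a s) * indicator (A k) s \<partial>lborel)"
      by (rule L.product_nn_integral_prod[OF J]) auto
    also have "\<dots> = (\<Prod>k\<in>J. emeasure (density lborel a) (A k))"
      by (intro prod.cong refl emeasure_density[symmetric]) auto
    finally show "emeasure (density (PiM J (\<lambda>_. lborel)) (\<lambda>\<sigma>. \<Prod>k\<in>J. a (\<sigma> k))) (PiE J A)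
      = (\<Prod>k\<in>J. emeasure (density lborel a) (A k))" .
  qed
qed

lemma integrable_density_bounded:
  fixes C f :: "'a \<Rightarrow> real"
  assumes "finite_measure (density M C)" and [measurable]: "C \<in> borel_measurable M" "f \<in> borel_measurable M"
    and "\<And>\<omega>. 0 \<le> C \<omega>" "\<And>\<omega>. \<bar>f \<omega>\<bar> \<le> 1"
  shows "integrable M (\<lambda>\<omega>. C \<omega> * f \<omega>)"
proof -
  have "integrable (density M C) f"
    using assms by (intro finite_measure.integrable_const_bound[where B=1]) auto
  then show ?thesis
    using assms integrable_density[of f M C] by simp
qed

lemma neyman_pearson_bound:
  fixes A B y :: "'a \<Rightarrow> real" and p q :: real
  assumes fin: "finite_measure (density M A)" "finite_measure (density M B)"
    and [measurable]: "A \<in> borel_measurable M" "B \<in> borel_measurable M" "y \<in> borel_measurable M" "E \<in> sets M"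
    and nonneg: "\<And>\<omega>. 0 \<le> A \<omega>" "\<And>\<omega>. 0 \<le> B \<omega>"
    and y_range: "\<And>\<omega>. 0 \<le> y \<omega> \<and> y \<omega> \<le> 1"
    and on_E: "\<And>\<omega>. \<omega> \<in> E \<Longrightarrow> q * B \<omega> \<le> p * A \<omega>"
    and off_E: "\<And>\<omega>. \<omega> \<in> space M - E \<Longrightarrow> p * A \<omega> \<le> q * B \<omega>"
  shows "p * (\<integral>\<omega>. y \<omega> \<partial>density M A) - q * (\<integral>\<omega>. y \<omega> \<partial>density M B)
    \<le> p * measure (density M A) E - q * measure (density M B) E"
proof -
  have y_abs: "\<And>\<omega>. \<bar>y \<omega>\<bar> \<le> 1" and E_abs: "\<And>\<omega>. \<bar>indicator E \<omega> :: real\<bar> \<le> 1"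
    using y_range by (auto simp: abs_le_iff indicator_def)
  have integrable: "integrable M (\<lambda>\<omega>. C \<omega> * f \<omega>)"
    if "C \<in> {A, B}" "f \<in> {y, indicator E}" for C f
    using that fin nonneg y_abs E_abs by (auto intro!: integrable_density_bounded)
  have measure_eq: "measure (density M C) E = (\<integral>\<omega>. C \<omega> * indicator E \<omega> \<partial>M)" if "C \<in> {A, B}" for C
  proof -
    have "measure (density M C) E = (\<integral>\<omega>. indicator E \<omega> \<partial>density M C)"
      using sets.sets_into_space[of E M] by (simp add: Int_absorb2)
    also have "\<dots> = (\<integral>\<omega>. C \<omega> * indicator E \<omega> \<partial>M)"
      using that nonneg by (subst integral_density) auto
    finally show ?thesis .
  qed
  have "p * (\<integral>\<omega>. y \<omega> \<partial>density M A) - q * (\<integral>\<omega>. y \<omega> \<partial>density M B)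
      = (\<integral>\<omega>. (p * A \<omega> - q * B \<omega>) * y \<omega> \<partial>M)"
    using nonneg integrable[of A y] integrable[of B y]
    by (simp add: integral_density left_diff_distrib mult.assoc)
  also have "\<dots> \<le> (\<integral>\<omega>. (p * A \<omega> - q * B \<omega>) * indicator E \<omega> \<partial>M)"
  proof (rule integral_mono)
    have "integrable M (\<lambda>\<omega>. (p * A \<omega> - q * B \<omega>) * f \<omega>)" if "f \<in> {y, indicator E}" for f
      using integrable[OF _ that] by (simp add: left_diff_distrib mult.assoc)
    then show "integrable M (\<lambda>\<omega>. (p * A \<omega> - q * B \<omega>) * y \<omega>)"
      and "integrable M (\<lambda>\<omega>. (p * A \<omega> - q * B \<omega>) * indicator E \<omega>)" by auto
    fix \<omega> assume "\<omega> \<in> space M"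
    then show "(p * A \<omega> - q * B \<omega>) * y \<omega> \<le> (p * A \<omega> - q * B \<omega>) * indicator E \<omega>"
      using on_E[of \<omega>] off_E[of \<omega>] y_range[of \<omega>]
      by (cases "\<omega> \<in> E") (auto simp: mult_left_le mult_nonpos_nonneg)
  qed
  also have "\<dots> = p * measure (density M A) E - q * measure (density M B) E"
    using integrable[of A "indicator E"] integrable[of B "indicator E"] measure_eq[of A] measure_eq[of B]
    by (simp add: left_diff_distrib mult.assoc)
  finally show ?thesis .
qed

lemma prob_space_others_law:
  "prob_space (density lborel f) \<Longrightarrow> prob_space (others_law f n i)"
  unfolding others_law_def by (rule prob_space_PiM)

lemma measurable_report_update:
  assumes "i < n" and [measurable]: "x \<in> borel_measurable (PiM {0..<n} (\<lambda>_. lborel))"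
  shows "(\<lambda>\<sigma>. x (\<sigma>(i := t))) \<in> borel_measurable (others_law f n i)"
proof -
  have "(\<lambda>\<sigma>. \<sigma>) \<in> measurable (others_law f n i) (PiM ({0..<n} - {i}) (\<lambda>_. lborel))"
    unfolding others_law_def by (intro measurable_ident_sets sets_PiM_cong) auto
  then have "(\<lambda>\<sigma>. \<sigma>(i := t)) \<in> measurable (others_law f n i) (PiM {0..<n} (\<lambda>_. lborel))"
    using \<open>i < n\<close> by (intro measurable_fun_upd[where J="{0..<n} - {i}"]) auto
  then show ?thesis
    by measurable
qed

lemma prob_space_density_lborel:
  fixes f :: "real \<Rightarrow> real"
  assumes [measurable]: "f \<in> borel_measurable borel" and "(\<integral>\<^sup>+ s. ennreal (f s) \<partial>lborel) = 1"
  shows "prob_space (density lborel f)"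
proof
  show "emeasure (density lborel f) (space (density lborel f)) = 1"
    using assms by (simp add: emeasure_density)
qed

lemma cond_alloc_range:
  assumes "prob_space (density lborel f)" "i < n"
    and "x \<in> borel_measurable (PiM {0..<n} (\<lambda>_. lborel))" "\<And>\<sigma>. 0 \<le> x \<sigma> \<and> x \<sigma> \<le> 1"
  shows "0 \<le> cond_alloc x f n i t \<and> cond_alloc x f n i t \<le> 1"
proof -
  interpret prob_space "others_law f n i"
    using assms(1) by (rule prob_space_others_law)
  have "integrable (others_law f n i) (\<lambda>\<sigma>. x (\<sigma>(i := t)))"
    using assms measurable_report_update by (intro integrable_const_bound[where B=1]) auto
  then show ?thesis
    unfolding cond_alloc_def using assms(4) by (auto intro!: integral_nonneg_AE integral_le_const)
qed

lemma others_law_eq_density_prod: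
  fixes f h :: "real \<Rightarrow> real"
  assumes "prob_space (density lborel f)" and [measurable]: "f \<in> borel_measurable borel" "h \<in> borel_measurable borel"
    and "AE s in lborel. f s = h s" "\<And>s. 0 \<le> h s"
  shows "others_law f n i = density (PiM ({0..<n} - {i}) (\<lambda>_. lborel)) (\<lambda>\<sigma>. \<Prod>k\<in>{0..<n} - {i}. h (\<sigma> k))"
proof -
  have f_eq_h: "density lborel f = density lborel h"
    using assms(4) by (intro density_cong) auto
  have "sigma_finite_measure (density lborel h)"
    using assms(1) unfolding f_eq_h by (rule prob_space_imp_sigma_finite)
  then show ?thesis
    unfolding others_law_def f_eq_h by (intro PiM_density_eq_density_prod assms(5)) auto
qed

lemma eff_event_sets:
  "eff_event n i s \<inter> space (PiM ({0..<n} - {i}) (\<lambda>_. lborel))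
    \<in> sets (PiM ({0..<n} - {i}) (\<lambda>_. lborel :: real measure))"
proof -
  have "{\<sigma> \<in> space (PiM ({0..<n} - {i}) (\<lambda>_. lborel)).
      (1 - s) * (\<Prod>k\<in>{0..<n} - {i}. 1 - \<sigma> k) \<le> s * (\<Prod>k\<in>{0..<n} - {i}. \<sigma> k)}
    \<in> sets (PiM ({0..<n} - {i}) (\<lambda>_. lborel :: real measure))"
    by measurable
  then show ?thesis
    unfolding eff_event_def by (simp add: Int_def conj_commute)
qed

lemma eff_event_weighted_likelihood:
  fixes g :: "real \<Rightarrow> real"
  assumes "\<And>s. 0 \<le> g s"
  shows "\<sigma> \<in> eff_event n i s \<Longrightarrow>
      (1 - s) * (\<Prod>k\<in>{0..<n} - {i}. (1 - \<sigma> k) * g (\<sigma> k)) \<le> s * (\<Prod>k\<in>{0..<n} - {i}. \<sigma> k * g (\<sigma> k))"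
    and "\<sigma> \<notin> eff_event n i s \<Longrightarrow>
      s * (\<Prod>k\<in>{0..<n} - {i}. \<sigma> k * g (\<sigma> k)) \<le> (1 - s) * (\<Prod>k\<in>{0..<n} - {i}. (1 - \<sigma> k) * g (\<sigma> k))"
proof -
  let ?J = "{0..<n} - {i}"
  define D where "D = s * (\<Prod>k\<in>?J. \<sigma> k) - (1 - s) * (\<Prod>k\<in>?J. 1 - \<sigma> k)"
  have factor: "s * (\<Prod>k\<in>?J. \<sigma> k * g (\<sigma> k)) - (1 - s) * (\<Prod>k\<in>?J. (1 - \<sigma> k) * g (\<sigma> k))
      = (\<Prod>k\<in>?J. g (\<sigma> k)) * D"
    unfolding D_def prod.distrib by algebra
  have "0 \<le> (\<Prod>k\<in>?J. g (\<sigma> k))"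
    using assms by (simp add: prod_nonneg)
  moreover have "\<sigma> \<in> eff_event n i s \<longleftrightarrow> 0 \<le> D"
    unfolding eff_event_def D_def by simp
  ultimately show "\<sigma> \<in> eff_event n i s \<Longrightarrow>
      (1 - s) * (\<Prod>k\<in>?J. (1 - \<sigma> k) * g (\<sigma> k)) \<le> s * (\<Prod>k\<in>?J. \<sigma> k * g (\<sigma> k))"
    and "\<sigma> \<notin> eff_event n i s \<Longrightarrow>
      s * (\<Prod>k\<in>?J. \<sigma> k * g (\<sigma> k)) \<le> (1 - s) * (\<Prod>k\<in>?J. (1 - \<sigma> k) * g (\<sigma> k))"
    using factor mult_nonneg_nonneg mult_nonneg_nonpos by (smt (verit), smt (verit))
qed

locale normalized_signals =
  fixes fp fm :: "real \<Rightarrow> real" and n i :: nat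
  assumes i: "i < n"
    and fp_meas[measurable]: "fp \<in> borel_measurable borel" and fm_meas[measurable]: "fm \<in> borel_measurable borel"
    and fp_nonneg: "\<And>s. 0 \<le> fp s" and fm_nonneg: "\<And>s. 0 \<le> fm s"
    and fp_prob: "(\<integral>\<^sup>+ s. ennreal (fp s) \<partial>lborel) = 1"
    and fm_prob: "(\<integral>\<^sup>+ s. ennreal (fm s) \<partial>lborel) = 1"
    and normal: "AE s in lborel. fp s = s * (fp s + fm s)"
begin

text \<open>The density of F_{+1} + F_{-1}, cut off outside [0,1] (where normalization forces
  it to vanish anyway) so that s * mass s and (1 - s) * mass s are nonnegative everywhere.\<close>
definition mass :: "real \<Rightarrow> real" where
  "mass s = (if s \<in> {0..1} then fp s + fm s else 0)"

lemma mass_measurable[measurable]: "mass \<in> borel_measurable borel"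
  unfolding mass_def by measurable

lemma mass_nonneg: "0 \<le> mass s"
  unfolding mass_def using fp_nonneg[of s] fm_nonneg[of s] by simp

lemma mass_weights_nonneg: "0 \<le> s * mass s" "0 \<le> (1 - s) * mass s"
  unfolding mass_def using fp_nonneg[of s] fm_nonneg[of s] by auto

lemma AE_densities_eq_mass: "AE s in lborel. fp s = s * mass s \<and> fm s = (1 - s) * mass s"
  using normal
proof eventually_elim
  case (elim s)
  have fm_eq: "fm s = (1 - s) * (fp s + fm s)"
    using elim by (simp add: algebra_simps)
  have "s \<in> {0..1}" if "0 < fp s + fm s"
  proof -
    have "0 \<le> s * (fp s + fm s)" "0 \<le> (1 - s) * (fp s + fm s)"
      using fp_nonneg[of s] fm_nonneg[of s] by (simp_all only: elim(1)[symmetric] fm_eq[symmetric])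
    then show ?thesis
      using that by (auto simp: zero_le_mult_iff)
  qed
  moreover have "fp s + fm s = 0 \<Longrightarrow> fp s = 0 \<and> fm s = 0"
    using fp_nonneg[of s] fm_nonneg[of s] by linarith
  ultimately show ?case
    using elim fm_eq fp_nonneg[of s] fm_nonneg[of s] unfolding mass_def by force
qed

lemma prob_space_fp: "prob_space (density lborel fp)"
  and prob_space_fm: "prob_space (density lborel fm)"
  using fp_prob fm_prob by (simp_all add: prob_space_density_lborel)

lemma others_law_fp:
  "others_law fp n i = density (PiM ({0..<n} - {i}) (\<lambda>_. lborel)) (\<lambda>\<sigma>. \<Prod>k\<in>{0..<n} - {i}. \<sigma> k * mass (\<sigma> k))"
  using AE_densities_eq_mass mass_weights_nonneg
  by (intro others_law_eq_density_prod prob_space_fp) (auto elim: AE_mp)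

lemma others_law_fm:
  "others_law fm n i = density (PiM ({0..<n} - {i}) (\<lambda>_. lborel)) (\<lambda>\<sigma>. \<Prod>k\<in>{0..<n} - {i}. (1 - \<sigma> k) * mass (\<sigma> k))"
  using AE_densities_eq_mass mass_weights_nonneg
  by (intro others_law_eq_density_prod prob_space_fm) (auto elim: AE_mp)

lemma util_le_first_best:
  assumes "x \<in> borel_measurable (PiM {0..<n} (\<lambda>_. lborel))" and x_range: "\<And>\<sigma>. 0 \<le> x \<sigma> \<and> x \<sigma> \<le> 1"
  shows "util x fp fm n i t s \<le> first_best fp fm n i s"
proof -
  define Q where "Q = PiM ({0..<n} - {i}) (\<lambda>_. lborel :: real measure)"
  define A where "A = (\<lambda>\<sigma>. \<Prod>k\<in>{0..<n} - {i}. \<sigma> k * mass (\<sigma> k))"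
  define B where "B = (\<lambda>\<sigma>. \<Prod>k\<in>{0..<n} - {i}. (1 - \<sigma> k) * mass (\<sigma> k))"
  define E where "E = eff_event n i s \<inter> space Q"
  have law_fp: "others_law fp n i = density Q A" and law_fm: "others_law fm n i = density Q B"
    unfolding Q_def A_def B_def by (fact others_law_fp others_law_fm)+
  have [measurable]: "A \<in> borel_measurable Q" "B \<in> borel_measurable Q"
    unfolding A_def B_def Q_def by measurable
  have "(\<lambda>\<sigma>. x (\<sigma>(i := t))) \<in> borel_measurable Q"
    using measurable_report_update[OF i assms(1), of t fp] unfolding law_fp by simp
  moreover have "E \<in> sets Q"
    unfolding E_def Q_def by (rule eff_event_sets)
  moreover have "(1 - s) * B \<sigma> \<le> s * A \<sigma>" if "\<sigma> \<in> E" for \<sigma>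
    using that eff_event_weighted_likelihood(1)[of mass, OF mass_nonneg] unfolding A_def B_def E_def by blast
  moreover have "s * A \<sigma> \<le> (1 - s) * B \<sigma>" if "\<sigma> \<in> space Q - E" for \<sigma>
    using that eff_event_weighted_likelihood(2)[of mass, OF mass_nonneg] unfolding A_def B_def E_def by blast
  ultimately have "s * (\<integral>\<sigma>. x (\<sigma>(i := t)) \<partial>density Q A) - (1 - s) * (\<integral>\<sigma>. x (\<sigma>(i := t)) \<partial>density Q B)
      \<le> s * measure (density Q A) E - (1 - s) * measure (density Q B) E"
  proof (intro neyman_pearson_bound)
    show "finite_measure (density Q A)" "finite_measure (density Q B)"
      unfolding law_fp[symmetric] law_fm[symmetric] using prob_space_fp prob_space_fm
      by (auto intro: prob_space.finite_measure prob_space_others_law)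
    show "0 \<le> A \<sigma>" "0 \<le> B \<sigma>" for \<sigma>
      unfolding A_def B_def using mass_weights_nonneg by (auto intro: prod_nonneg)
  qed (auto simp: x_range)
  then show ?thesis
    unfolding util_def cond_alloc_def first_best_def law_fp law_fm E_def by simp
qed

lemma first_best_nonneg: "0 \<le> first_best fp fm n i s"
  using util_le_first_best[of "\<lambda>_. 0" 0 s] by (simp add: util_def cond_alloc_def)

end

theorem lemmaA2:
  fixes n i :: nat and fp fm :: "real \<Rightarrow> real" and slo shi :: real
    and x :: "(nat \<Rightarrow> real) \<Rightarrow> real"
  assumes n2: "n \<ge> 2" and i: "i < n"
    \<comment> \<open>conditional signal laws F_{+1}, F_{-1} on [0,1] with densities fp, fm\<close>
    and fp_meas: "fp \<in> borel_measurable lborel" and fm_meas: "fm \<in> borel_measurable lborel"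
    and fp_nonneg: "\<And>s. fp s \<ge> 0" and fm_nonneg: "\<And>s. fm s \<ge> 0"
    and fp_prob: "(\<integral>\<^sup>+ s. ennreal (fp s) \<partial>lborel) = 1"
    and fm_prob: "(\<integral>\<^sup>+ s. ennreal (fm s) \<partial>lborel) = 1"
    \<comment> \<open>mutual absolute continuity\<close>
    and mac: "AE s in lborel. (fp s > 0 \<longleftrightarrow> fm s > 0)"
    \<comment> \<open>normalization: s = P[omega = +1 | s]\<close>
    and normal: "AE s in lborel. fp s = s * (fp s + fm s)"
    \<comment> \<open>density of F = (F_{-1}+F_{+1})/2 supported on the interval with endpoints slo < shi in [0,1]\<close>
    and bounds: "0 \<le> slo" "slo < shi" "shi \<le> 1"
    and supp_out: "AE s in lborel. s \<notin> {slo..shi} \<longrightarrow> (fp s + fm s) / 2 = 0"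
    and supp_in: "AE s in lborel. s \<in> {slo<..<shi} \<longrightarrow> (fp s + fm s) / 2 > 0"
    \<comment> \<open>mechanism for agent i\<close>
    and x_meas: "x \<in> borel_measurable (PiM {0..<n} (\<lambda>_. lborel))"
    and x_range: "\<And>\<sigma>. 0 \<le> x \<sigma> \<and> x \<sigma> \<le> 1"
    \<comment> \<open>(P) and (IC)\<close>
    and P: "\<And>s. s \<in> {slo..shi} \<Longrightarrow> util x fp fm n i s s \<ge> 0"
    and IC: "\<And>s t. s \<in> {slo..shi} \<Longrightarrow> t \<in> {slo..shi} \<Longrightarrow>
               util x fp fm n i s s \<ge> util x fp fm n i t s"
  shows "\<exists>Ut :: real \<Rightarrow> real.
           (\<forall>s\<in>{slo..shi}. Ut s = indirect_util x fp fm n i slo shi s)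
         \<and> mono_on {0..1} Ut
         \<and> convex_on {0..1} Ut
         \<and> 2-lipschitz_on {0..1} Ut
         \<and> (\<forall>s\<in>{0..1}. 0 \<le> Ut s \<and> Ut s \<le> first_best fp fm n i s)"
proof -
  interpret S: normalized_signals fp fm n i
    using i fp_meas fm_meas fp_nonneg fm_nonneg fp_prob fm_prob normal by unfold_locales simp_all
  interpret L: unit_lines "{slo..shi}" "cond_alloc x fp n i" "cond_alloc x fm n i"
    using bounds cond_alloc_range[OF S.prob_space_fp i x_meas x_range]
      cond_alloc_range[OF S.prob_space_fm i x_meas x_range]
    by unfold_locales auto
  have line_util: "L.line t s = util x fp fm n i t s" for t s
    unfolding L.line_def util_def ..
  show ?thesis
  proof (intro exI[of _ L.envelope] conjI ballI)
    show "mono_on {0..1} L.envelope"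
      using L.mono_envelope by (rule mono_imp_mono_on)
    show "convex_on {0..1} L.envelope"
      using L.convex_envelope by (rule convex_on_subset) auto
    show "2-lipschitz_on {0..1} L.envelope"
      using L.lipschitz_envelope by (rule lipschitz_on_subset) auto
  next
    fix s assume "s \<in> {slo..shi}"
    then show "L.envelope s = indirect_util x fp fm n i slo shi s"
      unfolding indirect_util_def line_util[symmetric] using P[of s]
      by (intro L.envelope_eq_Sup) (auto simp: line_util)
  next
    fix s :: real
    show "0 \<le> L.envelope s"
      by (rule L.envelope_nonneg)
    show "L.envelope s \<le> first_best fp fm n i s"
      by (intro L.envelope_le S.first_best_nonneg) (simp add: line_util S.util_le_first_best x_meas x_range)
  qed
qed

end
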